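(* Let $(n_1,\dots,n_k)$, $k\ge3$, be an admissible $k$-tuple of positive integers with $[n_1,\dots,n_k]=0$, and suppose there is exactly one index $j\in\{1,\dots,k\}$ with $n_j=1$. Then there are coprime integers $m$ and $n$ such that $[n_1,\dots,n_{j-1},2,n_{j+1},\dots,n_k]=\frac{m^2}{mn+1}$.
   Context: $[c_1,\dots,c_k]=c_1-\cfrac{1}{c_2-\cfrac{1}{\ddots-\cfrac1{c_k}}}$. A $k$-tuple of non-negative integers $(n_1,\dots,n_k)$ is admissible if every denominator appearing in $[n_1,\dots,n_k]$ is positive, i.e. $[n_j,\dots,n_k]>0$ for $j=2,\dots,k$. *)

theory Defs
  imports Complex_Main
begin

text \<open>Hirzebruch--Jung continued fraction [c_1,...,c_k] = c_1 - 1/[c_2,...,c_k].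
  The empty list is never used in the statement; its value is set to 0 by convention.\<close>
fun hj_cf :: "int list \<Rightarrow> rat" where
  "hj_cf [] = 0"
| "hj_cf [c] = of_int c"
| "hj_cf (c # d # cs) = of_int c - 1 / hj_cf (d # cs)"

text \<open>Admissible: non-negative entries and every denominator [n_j,...,n_k], j = 2..k, positive
  (0-based: the suffix starting at index i, for 1 \<le> i < k).\<close>
definition admissible :: "int list \<Rightarrow> bool" where
  "admissible ns \<longleftrightarrow> (\<forall>c \<in> set ns. c \<ge> 0) \<and>
     (\<forall>i. 1 \<le> i \<and> i < length ns \<longrightarrow> hj_cf (drop i ns) > 0)"

end

theory Submission
  imports Defs
begin

text \<open>Write M(c) = [[c,-1],[1,0]] and M(c_1,...,c_k) for the product of the M(c_i): it has
  determinant 1, and its first column (p, q) satisfies [c_1,...,c_k] = p/q as long as all tails are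
  nonzero. Split the tuple as A, 1, B. Since M(2) = M(1) + [[1,0],[0,0]], the first column of
  M(A, 2, B) is that of M(A, 1, B) plus b (a, c), where (a, c) is the first column of M(A) and b the
  top left entry of M(B). By hypothesis the first column of M(A, 1, B) is (0, q), and det M(A) = 1
  then forces b = q a, so [n_1,...,2,...,n_k] = a^2 / (a c + 1) with a, c coprime. Raising an entry
  raises the values of all tails, so the new tuple is still admissible.
  Only admissibility, [n_1,...,n_k] = 0 and n_j = 1 are needed.\<close>

type_synonym mat2 = "int \<times> int \<times> int \<times> int" \<comment> \<open>(a, b, c, d) is [[a, b], [c, d]]\<close>

fun mat2_mult :: "mat2 \<Rightarrow> mat2 \<Rightarrow> mat2" where
  "mat2_mult (a, b, c, d) (e, f, g, h) = (a*e + b*g, a*f + b*h, c*e + d*g, c*f + d*h)"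

fun mat2_det :: "mat2 \<Rightarrow> int" where
  "mat2_det (a, b, c, d) = a*d - b*c"

fun hj_matrix :: "int list \<Rightarrow> mat2" where
  "hj_matrix [] = (1, 0, 0, 1)"
| "hj_matrix (c # cs) = mat2_mult (c, -1, 1, 0) (hj_matrix cs)"

lemma mat2_mult_assoc: "mat2_mult (mat2_mult x y) z = mat2_mult x (mat2_mult y z)"
  by (cases x; cases y; cases z) (simp add: algebra_simps)

lemma mat2_mult_one_left: "mat2_mult (1, 0, 0, 1) x = x"
  by (cases x) simp

lemma mat2_det_mult: "mat2_det (mat2_mult x y) = mat2_det x * mat2_det y"
  by (cases x; cases y) (simp add: algebra_simps)

lemma hj_matrix_append: "hj_matrix (xs @ ys) = mat2_mult (hj_matrix xs) (hj_matrix ys)"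
  by (induction xs) (simp_all add: mat2_mult_one_left mat2_mult_assoc)

lemma mat2_det_hj_matrix: "mat2_det (hj_matrix xs) = 1"
  by (induction xs) (simp_all add: mat2_det_mult)

lemma coprime_hj_matrix_first_column:
  assumes "hj_matrix xs = (a, b, c, d)"
  shows "coprime a c"
proof (rule coprimeI)
  fix e assume "e dvd a" "e dvd c"
  then have "e dvd a*d - b*c" by simp
  then show "is_unit e"
    using mat2_det_hj_matrix[of xs] assms by simp
qed

lemma hj_cf_Cons: "t \<noteq> [] \<Longrightarrow> hj_cf (c # t) = of_int c - 1 / hj_cf t"
  by (cases t) auto

lemma hj_cf_eq_hj_matrix_ratio:
  assumes "cs \<noteq> []" and "\<forall>i. 1 \<le> i \<and> i < length cs \<longrightarrow> hj_cf (drop i cs) \<noteq> 0"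
    and "hj_matrix cs = (a, b, c, d)"
  shows "c \<noteq> 0 \<and> hj_cf cs = of_int a / of_int c"
  using assms
proof (induction cs arbitrary: a b c d)
  case Nil
  then show ?case by simp
next
  case (Cons x t)
  show ?case
  proof (cases "t = []")
    case True
    then show ?thesis using Cons.prems by simp
  next
    case False
    obtain a' b' c' d' where t_matrix: "hj_matrix t = (a', b', c', d')"
      by (cases "hj_matrix t") auto
    have "\<forall>i. 1 \<le> i \<and> i < length t \<longrightarrow> hj_cf (drop i t) \<noteq> 0"
      using Cons.prems(2) by (metis Suc_less_eq drop_Suc_Cons le_SucI length_Cons)
    with Cons.IH[OF False _ t_matrix] have "c' \<noteq> 0" and t_value: "hj_cf t = of_int a' / of_int c'"
      by auto
    moreover have "hj_cf t \<noteq> 0"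
      using Cons.prems(2)[rule_format, of 1] False by simp
    ultimately have "a' \<noteq> 0" and
      "hj_cf (x # t) = (of_int x * of_int a' - of_int c') / of_int a'"
      by (auto simp: hj_cf_Cons[OF False] t_value field_simps)
    moreover have "a = x*a' - c'" "c = a'"
      using Cons.prems(3) t_matrix by auto
    ultimately show ?thesis by simp
  qed
qed

lemma hj_cf_Cons_mono:
  assumes "c \<le> c'" and "0 < hj_cf t" and "hj_cf t \<le> hj_cf t'" and "t \<noteq> []" and "t' \<noteq> []"
  shows "hj_cf (c # t) \<le> hj_cf (c' # t')"
proof -
  have "1 / hj_cf t' \<le> 1 / hj_cf t"
    using assms(2,3) by (simp add: divide_left_mono)
  then show ?thesis
    using assms(1,4,5) by (simp add: hj_cf_Cons)
qed

lemma hj_cf_list_update_mono: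
  assumes "j < length xs" and "xs ! j \<le> y"
    and "\<forall>i. 1 \<le> i \<and> i < length xs \<longrightarrow> hj_cf (drop i xs) > 0"
  shows "hj_cf xs \<le> hj_cf (xs[j := y])"
  using assms
proof (induction xs arbitrary: j)
  case Nil
  then show ?case by simp
next
  case (Cons x t)
  show ?case
  proof (cases j)
    case 0
    then show ?thesis
      using Cons.prems(2) by (cases t) auto
  next
    case (Suc j')
    have "\<forall>i. 1 \<le> i \<and> i < length t \<longrightarrow> hj_cf (drop i t) > 0"
      using Cons.prems(3) by (metis Suc_less_eq drop_Suc_Cons le_SucI length_Cons)
    then have "hj_cf t \<le> hj_cf (t[j' := y])"
      using Cons.IH Cons.prems(1,2) Suc by simp
    moreover have "0 < hj_cf t"
      using Cons.prems(3)[rule_format, of 1] Cons.prems(1) Suc by force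
    ultimately show ?thesis
      using Cons.prems(1) Suc by (auto intro: hj_cf_Cons_mono)
  qed
qed

lemma admissible_list_update_increase:
  assumes "admissible xs" and "j < length xs" and "xs ! j \<le> y"
  shows "admissible (xs[j := y])"
  unfolding admissible_def
proof (intro conjI allI impI)
  have "xs ! j \<ge> 0"
    using assms(1,2) nth_mem unfolding admissible_def by blast
  then show "\<forall>c \<in> set (xs[j := y]). c \<ge> 0"
    using assms(1,3) set_update_subset_insert unfolding admissible_def by fastforce
next
  fix i assume i: "1 \<le> i \<and> i < length (xs[j := y])"
  have tails_pos: "\<forall>i. 1 \<le> i \<and> i < length xs \<longrightarrow> hj_cf (drop i xs) > 0"
    using assms(1) unfolding admissible_def by blast
  show "hj_cf (drop i (xs[j := y])) > 0"
  proof (cases "i \<le> j")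
    case True
    have "\<forall>k. 1 \<le> k \<and> k < length (drop i xs) \<longrightarrow> hj_cf (drop k (drop i xs)) > 0"
      using tails_pos by (auto simp: add.commute)
    then have "hj_cf (drop i xs) \<le> hj_cf ((drop i xs)[j - i := y])"
      using hj_cf_list_update_mono assms(2,3) True by simp
    moreover have "hj_cf (drop i xs) > 0"
      using tails_pos i by simp
    ultimately show ?thesis
      using True by (simp add: drop_update_swap)
  next
    case False
    then show ?thesis
      using tails_pos i by simp
  qed
qed

lemma hj_matrix_one_to_two:
  assumes "hj_matrix A = (a, b, c, d)" and "hj_matrix (A @ 1 # B) = (0, b', q, d')"
  obtains b'' d'' where "hj_matrix (A @ 2 # B) = (q * a^2, b'', q * (a*c + 1), d'')"
proof -
  obtain e f g h where B_matrix: "hj_matrix B = (e, f, g, h)"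
    by (cases "hj_matrix B") auto
  have "hj_matrix (A @ 1 # B) = (a*(e - g) + b*e, a*(f - h) + b*f, c*(e - g) + d*e, c*(f - h) + d*f)"
    using assms(1) B_matrix by (simp add: hj_matrix_append algebra_simps)
  with assms(2) have top: "a*(e - g) + b*e = 0" and bottom: "c*(e - g) + d*e = q"
    by auto
  have "q * a = (a*d - b*c) * e"
    using top bottom by algebra
  with mat2_det_hj_matrix[of A] assms(1) have e: "e = q * a"
    by simp
  have "hj_matrix (A @ 2 # B) =
      ((a*(e - g) + b*e) + a*e, a*(2*f - h) + b*f, (c*(e - g) + d*e) + c*e, c*(2*f - h) + d*f)"
    using assms(1) B_matrix by (simp add: hj_matrix_append algebra_simps)
  also have "\<dots> = (a*e, a*(2*f - h) + b*f, q + c*e, c*(2*f - h) + d*f)"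
    unfolding top bottom by simp
  also have "\<dots> = (q * a^2, a*(2*f - h) + b*f, q * (a*c + 1), c*(2*f - h) + d*f)"
    unfolding e by (simp add: algebra_simps power2_eq_square)
  finally show ?thesis
    using that by blast
qed

theorem lemma2p4:
  fixes ns :: "int list" and j :: nat
  assumes "length ns \<ge> 3"
    and "admissible ns"
    and "\<forall>c \<in> set ns. c > 0"
    and "hj_cf ns = 0"
    and "j < length ns" and "ns ! j = 1"
    and "\<forall>i < length ns. ns ! i = 1 \<longrightarrow> i = j"
  shows "\<exists>m n :: int. coprime m n \<and> m * n + 1 \<noteq> 0 \<and>
           hj_cf (ns[j := 2]) = of_int (m ^ 2) / of_int (m * n + 1)"
proof -
  define A where "A = take j ns"
  define B where "B = drop (Suc j) ns"
  have ns_split: "ns = A @ 1 # B"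
    unfolding A_def B_def using id_take_nth_drop[OF assms(5)] assms(6) by simp
  have ns'_split: "ns[j := 2] = A @ 2 # B"
    unfolding A_def B_def using assms(5) by (simp add: upd_conv_take_nth_drop)
  have tails_nonzero: "\<forall>i. 1 \<le> i \<and> i < length xs \<longrightarrow> hj_cf (drop i xs) \<noteq> 0"
    if "admissible xs" for xs
    using that unfolding admissible_def by auto
  have admissible_bumped: "admissible (ns[j := 2])"
    using admissible_list_update_increase assms(2,5,6) by simp
  have nonempty: "ns \<noteq> []" "ns[j := 2] \<noteq> []"
    using assms(5) by auto
  note ratio = hj_cf_eq_hj_matrix_ratio[OF nonempty(1) tails_nonzero[OF assms(2)]]
    and ratio' = hj_cf_eq_hj_matrix_ratio[OF nonempty(2) tails_nonzero[OF admissible_bumped]]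
  obtain a b c d where A_matrix: "hj_matrix A = (a, b, c, d)"
    by (cases "hj_matrix A") auto
  obtain p b' q d' where ns_matrix: "hj_matrix ns = (p, b', q, d')"
    by (cases "hj_matrix ns") auto
  have "p = 0"
    using ratio[OF ns_matrix] assms(4) ns_split by simp
  with ns_matrix ns_split have "hj_matrix (A @ 1 # B) = (0, b', q, d')"
    by simp
  then obtain b'' d'' where "hj_matrix (A @ 2 # B) = (q * a^2, b'', q * (a*c + 1), d'')"
    by (rule hj_matrix_one_to_two[OF A_matrix])
  from ratio'[OF this[folded ns'_split]] have "a*c + 1 \<noteq> 0 \<and> hj_cf (ns[j := 2]) = of_int (a^2) / of_int (a*c + 1)"
    by simp
  then show ?thesis
    using coprime_hj_matrix_first_column[OF A_matrix] by blast
qed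

end
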